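(* Let $\Gamma$ be a pre-automatic structure with generating alphabet $A$, and suppose that $\sigma : A^* \to S$ and $\tau : A^* \to T$ are interpretations of $\Gamma$ with respect to semigroups $S$ and $T$ respectively. Then $S$ and $T$ are isomorphic.
   Context: Let $A$ be a finite alphabet, $\$ \notin A$ a new symbol, $A^\$ = A\cup\{\$\}$. Define $\delta : A^*\times A^* \to (A^\$\times A^\$)^*$ by padding the shorter word on the right with $\$$ and reading the two words letter by letter as a word of pairs: for $a_i,b_j\in A$, $\delta(a_1\cdots a_m,b_1\cdots b_n)=(a_1,b_1)\cdots(a_m,b_m)(\$,b_{m+1})\cdots(\$,b_n)$ if $m<n$, $(a_1,b_1)\cdots(a_m,b_m)$ if $m=n$, and $(a_1,b_1)\cdots(a_n,b_n)(a_{n+1},\$)\cdots(a_m,\$)$ if $m>n$. A synchronous automaton over $A$ is a finite automaton over the alphabet $A^\$\times A^\$$; it recognises a relation $R\subseteq A^*\times A^*$ if the language it accepts is exactly $\delta(R)$. A pre-automatic structure $\Gamma$ consists of: a finite alphabet $A$ of generators; a finite automaton recognising a language $L\subseteq A^*$ (the language of representatives); a synchronous automaton recognising a relation $L_=\subseteq L\times L$; and for each $a\in A$ a synchronous automaton recognising a relation $L_a\subseteq L\times L$. An interpretation of $\Gamma$ with respect to a semigroup $S$ is a morphism $\sigma : A^*\to S$ such that (i) $\sigma(L)=S$; (ii) for $u,v\in L$, $(u,v)\in L_=$ iff $\sigma(u)=\sigma(v)$; (iii) for each $a\in A$ and $u,v\in L$, $(u,v)\in L_a$ iff $\sigma(ua)=\sigma(v)$.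 *)

theory Defs
  imports Main
begin

record 's fa =
  fa_states :: "nat set"
  fa_alpha  :: "'s set"
  fa_init   :: "nat set"
  fa_trans  :: "(nat \<times> 's \<times> nat) set"
  fa_final  :: "nat set"

definition finite_automaton :: "'s fa \<Rightarrow> 's set \<Rightarrow> bool" where
  "finite_automaton M \<Sigma> \<longleftrightarrow>
     fa_alpha M = \<Sigma> \<and> finite \<Sigma> \<and> finite (fa_states M) \<and>
     fa_init M \<subseteq> fa_states M \<and> fa_final M \<subseteq> fa_states M \<and>
     fa_trans M \<subseteq> fa_states M \<times> \<Sigma> \<times> fa_states M"

fun fa_run :: "'s fa \<Rightarrow> nat \<Rightarrow> 's list \<Rightarrow> nat \<Rightarrow> bool" where
  "fa_run M p [] q \<longleftrightarrow> p = q"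
| "fa_run M p (x # w) q \<longleftrightarrow> (\<exists>r. (p, x, r) \<in> fa_trans M \<and> fa_run M r w q)"

definition fa_language :: "'s fa \<Rightarrow> 's list set" where
  "fa_language M = {w. w \<in> lists (fa_alpha M) \<and>
     (\<exists>p \<in> fa_init M. \<exists>q \<in> fa_final M. fa_run M p w q)}"

text \<open>The padding symbol \$ is represented by None; a letter a of A by Some a.\<close>

definition dollar_alph :: "'a set \<Rightarrow> 'a option set" where
  "dollar_alph A = insert None (Some ` A)"

definition pad :: "'a list \<Rightarrow> nat \<Rightarrow> 'a option list" where
  "pad u n = map Some u @ replicate (n - length u) None"

definition delta :: "'a list \<Rightarrow> 'a list \<Rightarrow> ('a option \<times> 'a option) list" where
  "delta u v = zip (pad u (length v)) (pad v (length u))"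

definition synchronous_automaton :: "('a option \<times> 'a option) fa \<Rightarrow> 'a set \<Rightarrow> bool" where
  "synchronous_automaton M A \<longleftrightarrow> finite_automaton M (dollar_alph A \<times> dollar_alph A)"

definition recognises_rel ::
  "('a option \<times> 'a option) fa \<Rightarrow> ('a list \<times> 'a list) set \<Rightarrow> bool" where
  "recognises_rel M R \<longleftrightarrow> fa_language M = (\<lambda>(u, v). delta u v) ` R"

definition pre_automatic_structure ::
  "'a set \<Rightarrow> 'a fa \<Rightarrow> 'a list set
   \<Rightarrow> ('a option \<times> 'a option) fa \<Rightarrow> ('a list \<times> 'a list) set
   \<Rightarrow> ('a \<Rightarrow> ('a option \<times> 'a option) fa) \<Rightarrow> ('a \<Rightarrow> ('a list \<times> 'a list) set) \<Rightarrow> bool" where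
  "pre_automatic_structure A M_L L Meq Leq Ma La \<longleftrightarrow>
     finite A \<and>
     finite_automaton M_L A \<and> fa_language M_L = L \<and>
     synchronous_automaton Meq A \<and> Leq \<subseteq> L \<times> L \<and> recognises_rel Meq Leq \<and>
     (\<forall>a \<in> A. synchronous_automaton (Ma a) A \<and> La a \<subseteq> L \<times> L \<and> recognises_rel (Ma a) (La a))"

definition word_morphism :: "'a set \<Rightarrow> ('a list \<Rightarrow> 's::semigroup_mult) \<Rightarrow> bool" where
  "word_morphism A \<sigma> \<longleftrightarrow> (\<forall>u \<in> lists A. \<forall>v \<in> lists A. \<sigma> (u @ v) = \<sigma> u * \<sigma> v)"

text \<open>Interpretation of the structure with respect to the semigroup given by the
  (whole) type 's; condition (i) says sigma(L) is all of S.\<close>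

definition interpretation_of ::
  "'a set \<Rightarrow> 'a list set \<Rightarrow> ('a list \<times> 'a list) set \<Rightarrow> ('a \<Rightarrow> ('a list \<times> 'a list) set)
   \<Rightarrow> ('a list \<Rightarrow> 's::semigroup_mult) \<Rightarrow> bool" where
  "interpretation_of A L Leq La \<sigma> \<longleftrightarrow>
     word_morphism A \<sigma> \<and>
     \<sigma> ` L = UNIV \<and>
     (\<forall>u \<in> L. \<forall>v \<in> L. (u, v) \<in> Leq \<longleftrightarrow> \<sigma> u = \<sigma> v) \<and>
     (\<forall>a \<in> A. \<forall>u \<in> L. \<forall>v \<in> L. (u, v) \<in> La a \<longleftrightarrow> \<sigma> (u @ [a]) = \<sigma> v)"

definition semigroup_iso :: "('s::semigroup_mult \<Rightarrow> 't::semigroup_mult) \<Rightarrow> bool" where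
  "semigroup_iso f \<longleftrightarrow> bij f \<and> (\<forall>x y. f (x * y) = f x * f y)"

end

theory Submission
  imports Defs
begin

text \<open>Both interpretations have the same kernel on L, and L is closed, up to either
  interpretation, under right multiplication by words: a representative of u x a is
  found from one of u x through the relation L_a, which both interpretations read
  alike. Hence sending \<sigma> u to \<tau> u for u in L is a well-defined bijective morphism.\<close>

lemma pre_automatic_structure_language_subset:
  "pre_automatic_structure A M_L L Meq Leq Ma La \<Longrightarrow> L \<subseteq> lists A"
  unfolding pre_automatic_structure_def finite_automaton_def fa_language_def by auto

lemma interpretation_append:
  "interpretation_of A L Leq La \<sigma> \<Longrightarrow> u \<in> lists A \<Longrightarrow> v \<in> lists A \<Longrightarrow> \<sigma> (u @ v) = \<sigma> u * \<sigma> v"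
  unfolding interpretation_of_def word_morphism_def by blast

lemma interpretation_surj: "interpretation_of A L Leq La \<sigma> \<Longrightarrow> \<sigma> ` L = UNIV"
  unfolding interpretation_of_def by blast

lemma interpretations_same_kernel:
  assumes "interpretation_of A L Leq La \<sigma>" "interpretation_of A L Leq La \<tau>"
    and "u \<in> L" "v \<in> L"
  shows "\<sigma> u = \<sigma> v \<longleftrightarrow> \<tau> u = \<tau> v"
  using assms unfolding interpretation_of_def by blast

lemma interpretations_common_representative:
  assumes L: "L \<subseteq> lists A"
    and \<sigma>: "interpretation_of A L Leq La \<sigma>" and \<tau>: "interpretation_of A L Leq La \<tau>"
    and u: "u \<in> L" and x: "x \<in> lists A"
  shows "\<exists>w\<in>L. \<sigma> (u @ x) = \<sigma> w \<and> \<tau> (u @ x) = \<tau> w"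
  using x
proof (induction x rule: rev_induct)
  case Nil
  then show ?case using u by auto
next
  case (snoc a x)
  then have a: "[a] \<in> lists A" and x: "x \<in> lists A" by auto
  with snoc.IH obtain w where w: "w \<in> L" "\<sigma> (u @ x) = \<sigma> w" "\<tau> (u @ x) = \<tau> w"
    by blast
  obtain w' where w': "w' \<in> L" "\<sigma> (w @ [a]) = \<sigma> w'"
    using interpretation_surj[OF \<sigma>] by (metis UNIV_I imageE)
  have "(w, w') \<in> La a"
    using \<sigma> a w(1) w'(1) w'(2) unfolding interpretation_of_def by simp
  then have \<tau>w': "\<tau> (w @ [a]) = \<tau> w'"
    using \<tau> a w(1) w'(1) unfolding interpretation_of_def by simp
  have ux: "u @ x \<in> lists A" and "w \<in> lists A"
    using L u w(1) x by auto
  have "\<sigma> (u @ x @ [a]) = \<sigma> (u @ x) * \<sigma> [a]"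
    using interpretation_append[OF \<sigma> ux a] by simp
  also have "\<dots> = \<sigma> w'"
    using interpretation_append[OF \<sigma> \<open>w \<in> lists A\<close> a] w(2) w'(2) by simp
  moreover have "\<tau> (u @ x @ [a]) = \<tau> (u @ x) * \<tau> [a]"
    using interpretation_append[OF \<tau> ux a] by simp
  moreover have "\<dots> = \<tau> w'"
    using interpretation_append[OF \<tau> \<open>w \<in> lists A\<close> a] w(3) \<tau>w' by simp
  ultimately show ?case using w'(1) by auto
qed

lemma bij_factor_same_kernel:
  assumes onto: "\<sigma> ` L = UNIV" "\<tau> ` L = UNIV"
    and kernel: "\<And>u v. u \<in> L \<Longrightarrow> v \<in> L \<Longrightarrow> \<sigma> u = \<sigma> v \<longleftrightarrow> \<tau> u = \<tau> v"
  shows "\<exists>f. bij f \<and> (\<forall>u\<in>L. f (\<sigma> u) = \<tau> u)"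
proof -
  define f where "f y = \<tau> (inv_into L \<sigma> y)" for y
  have rep: "inv_into L \<sigma> y \<in> L" "\<sigma> (inv_into L \<sigma> y) = y" for y
    using onto(1) by (auto intro: inv_into_into f_inv_into_f)
  have factor: "f (\<sigma> u) = \<tau> u" if "u \<in> L" for u
    unfolding f_def using rep[of "\<sigma> u"] kernel[OF _ that] by blast
  have "inj f"
  proof (rule injI)
    fix y z assume "f y = f z"
    then have "\<sigma> (inv_into L \<sigma> y) = \<sigma> (inv_into L \<sigma> z)"
      unfolding f_def using kernel rep(1) by blast
    then show "y = z" by (simp add: rep(2))
  qed
  moreover have "surj f"
    unfolding surj_def
  proof
    fix z
    from onto(2) obtain u where "u \<in> L" "z = \<tau> u" by (metis UNIV_I imageE)
    then show "\<exists>y. z = f y" using factor by metis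
  qed
  ultimately show ?thesis using factor bij_def by blast
qed

theorem proposition2p3:
  fixes A :: "'a set"
    and M_L :: "'a fa" and L :: "'a list set"
    and Meq :: "('a option \<times> 'a option) fa" and Leq :: "('a list \<times> 'a list) set"
    and Ma :: "'a \<Rightarrow> ('a option \<times> 'a option) fa" and La :: "'a \<Rightarrow> ('a list \<times> 'a list) set"
    and \<sigma> :: "'a list \<Rightarrow> 's::semigroup_mult"
    and \<tau> :: "'a list \<Rightarrow> 't::semigroup_mult"
  assumes "pre_automatic_structure A M_L L Meq Leq Ma La"
    and "interpretation_of A L Leq La \<sigma>"
    and "interpretation_of A L Leq La \<tau>"
  shows "\<exists>f :: 's \<Rightarrow> 't. semigroup_iso f"
proof -
  note \<sigma> = assms(2) and \<tau> = assms(3)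
  have L: "L \<subseteq> lists A"
    using assms(1) by (rule pre_automatic_structure_language_subset)
  obtain f :: "'s \<Rightarrow> 't" where "bij f" and f: "\<forall>u\<in>L. f (\<sigma> u) = \<tau> u"
    using bij_factor_same_kernel[OF interpretation_surj[OF \<sigma>] interpretation_surj[OF \<tau>]]
      interpretations_same_kernel[OF \<sigma> \<tau>] by blast
  have "f (x * y) = f x * f y" for x y
  proof -
    obtain u v where uv: "u \<in> L" "v \<in> L" "x = \<sigma> u" "y = \<sigma> v"
      using interpretation_surj[OF \<sigma>] by (metis UNIV_I imageE)
    then have lists: "u \<in> lists A" "v \<in> lists A" using L by auto
    obtain w where w: "w \<in> L" "\<sigma> (u @ v) = \<sigma> w" "\<tau> (u @ v) = \<tau> w"
      using interpretations_common_representative[OF L \<sigma> \<tau> uv(1) lists(2)] by blast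
    have "f (x * y) = f (\<sigma> w)"
      using uv(3,4) w(2) interpretation_append[OF \<sigma> lists] by simp
    also have "\<dots> = \<tau> u * \<tau> v"
      using f w(1,3) interpretation_append[OF \<tau> lists] by simp
    also have "\<dots> = f x * f y"
      using f uv by simp
    finally show ?thesis .
  qed
  with \<open>bij f\<close> show ?thesis unfolding semigroup_iso_def by blast
qed

end
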